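(* Assume $f$ is strongly convex on $\mathrm{dom}\,\psi$ with parameter $\mu>0$ (i.e. $\langle\nabla^2 f(x)h,h\rangle \ge \mu\|h\|^2$ for all $x\in\mathrm{dom}\,\psi$, $h\in\mathbb{E}$). Consider the method: choose $H \ge L_2$, $x_0 \in \mathrm{dom}\,\psi$ and $F'_0 \in \partial F(x_0)$; for $k \ge 0$ set $g_k = \|F'_k\|_*$, $A_k = \frac{1}{\sigma}\sqrt{\frac{H}{3}g_k}$, $x_{k+1} = T_{A_k}(x_k)$, and $$F'_{k+1} = \nabla f(x_{k+1}) - \nabla f(x_k) - \nabla^2 f(x_k)(x_{k+1} - x_k) - A_k(\nabla d(x_{k+1}) - \nabla d(x_k)).$$ Then for any $k\ge 0$, $$\|F'_{k+1}\|_* \;\le\; \frac{2c}{\mu}\sqrt{\frac{H}{3}}\,\|F'_k\|_*^{3/2}, \qquad c = \sigma^{-1} + \frac{3L_2}{2H}.$$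
   Context: $\mathbb{E}$ is a finite-dimensional real vector space with an arbitrary norm $\|\cdot\|$; $\mathbb{E}^*$ is its dual with dual norm $\|g\|_* = \max\{\langle g, x\rangle : \|x\|\le 1\}$; for a self-adjoint linear operator $B:\mathbb{E}\to\mathbb{E}^*$, $\|B\| = \max\{|\langle Bx,x\rangle| : \|x\|\le 1\}$. $F = f + \psi$, where $\psi$ is a closed convex function with $\mathrm{dom}\,\psi \subseteq \mathbb{E}$ and $f$ is convex and twice continuously differentiable with $\|\nabla^2 f(x) - \nabla^2 f(y)\| \le L_2\|x-y\|$ for all $x,y\in\mathrm{dom}\,\psi$. The scaling function $d$ is differentiable and satisfies, for some $\sigma\in(0,1]$ and all $x,y \in \mathrm{dom}\,\psi$: $d(y) \ge d(x) + \langle \nabla d(x), y-x\rangle + \frac{\sigma}{2}\|y-x\|^2$ and $\|\nabla d(x) - \nabla d(y)\|_* \le \|x-y\|$. Bregman distance: $\rho(x,y) = d(y) - d(x) - \langle \nabla d(x), y-x\rangle$. For $\bar x\in\mathrm{dom}\,\psi$ and $A>0$, $$T_A(\bar x) = \arg\min_{y\in\mathrm{dom}\,\psi}\Big[ f(\bar x) + \langle \nabla f(\bar x), y-\bar x\rangle + \tfrac12 \langle \nabla^2 f(\bar x)(y-\bar x), y-\bar x\rangle + A\rho(\bar x,y) + \psi(y)\Big].$$ (Each $F'_k$ is an element of $\partial F(x_k)$.) *)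

theory Defs
  imports "HOL-Analysis.Analysis"
begin

text \<open>The space E is modelled by a Euclidean type 'a equipped with an arbitrary norm N;
the dual space E* is identified with 'a via the inner product pairing.\<close>

definition is_norm :: "('a::euclidean_space \<Rightarrow> real) \<Rightarrow> bool" where
  "is_norm N \<longleftrightarrow> (\<forall>x. N x \<ge> 0) \<and> (\<forall>x. N x = 0 \<longleftrightarrow> x = 0)
     \<and> (\<forall>c x. N (c *\<^sub>R x) = \<bar>c\<bar> * N x) \<and> (\<forall>x y. N (x + y) \<le> N x + N y)"

definition dual_norm :: "('a::euclidean_space \<Rightarrow> real) \<Rightarrow> 'a \<Rightarrow> real" where
  "dual_norm N g = Sup {g \<bullet> x | x. N x \<le> 1}"

text \<open>Norm of a (self-adjoint) linear operator B : E \<rightarrow> E*.\<close>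
definition op_norm :: "('a::euclidean_space \<Rightarrow> real) \<Rightarrow> ('a \<Rightarrow> 'a) \<Rightarrow> real" where
  "op_norm N B = Sup {\<bar>B x \<bullet> x\<bar> | x. N x \<le> 1}"

text \<open>Closed convex function psi, given by its (nonempty) effective domain D and its values on D.\<close>
definition closed_convex_fun :: "'a::euclidean_space set \<Rightarrow> ('a \<Rightarrow> real) \<Rightarrow> bool" where
  "closed_convex_fun D \<psi> \<longleftrightarrow> convex D \<and> convex_on D \<psi> \<and>
     closed {(x, t::real). x \<in> D \<and> \<psi> x \<le> t}"

definition subdiff :: "'a::euclidean_space set \<Rightarrow> ('a \<Rightarrow> real) \<Rightarrow> 'a \<Rightarrow> 'a set" where
  "subdiff D F x = {g. x \<in> D \<and> (\<forall>y\<in>D. F y \<ge> F x + g \<bullet> (y - x))}"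

definition bregman :: "('a::euclidean_space \<Rightarrow> real) \<Rightarrow> ('a \<Rightarrow> 'a) \<Rightarrow> 'a \<Rightarrow> 'a \<Rightarrow> real" where
  "bregman d gd x y = d y - d x - gd x \<bullet> (y - x)"

definition model :: "('a::euclidean_space \<Rightarrow> real) \<Rightarrow> ('a \<Rightarrow> 'a) \<Rightarrow> ('a \<Rightarrow> 'a \<Rightarrow> 'a)
    \<Rightarrow> ('a \<Rightarrow> real) \<Rightarrow> ('a \<Rightarrow> 'a) \<Rightarrow> ('a \<Rightarrow> real) \<Rightarrow> real \<Rightarrow> 'a \<Rightarrow> 'a \<Rightarrow> real" where
  "model f gf Hf d gd \<psi> A xb y =
     f xb + gf xb \<bullet> (y - xb) + (1/2) * (Hf xb (y - xb) \<bullet> (y - xb)) + A * bregman d gd xb y + \<psi> y"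

definition is_T :: "'a::euclidean_space set \<Rightarrow> ('a \<Rightarrow> real) \<Rightarrow> ('a \<Rightarrow> 'a) \<Rightarrow> ('a \<Rightarrow> 'a \<Rightarrow> 'a)
    \<Rightarrow> ('a \<Rightarrow> real) \<Rightarrow> ('a \<Rightarrow> 'a) \<Rightarrow> ('a \<Rightarrow> real) \<Rightarrow> real \<Rightarrow> 'a \<Rightarrow> 'a \<Rightarrow> bool" where
  "is_T D f gf Hf d gd \<psi> A xb y \<longleftrightarrow> y \<in> D \<and>
     (\<forall>z\<in>D. model f gf Hf d gd \<psi> A xb y \<le> model f gf Hf d gd \<psi> A xb z)"

end

theory Submission
  imports Defs
begin

text \<open>The optimality condition of the regularized Newton step says that
  F'(k+1) - \<nabla>f(x(k+1)) is a subgradient of \<psi> at x(k+1); as F'(0) \<in> \<partial>F(x(0)), the same holds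
  for every k. Writing r for the length of the step from x(k) to x(k+1), monotonicity of \<partial>\<psi>
  between the two points together with the strong convexity of f and d gives
  r (\<mu> + \<sigma> A(k)) \<le> \<parallel>F'(k)\<parallel>*, while the Lipschitz bounds on \<nabla>\<nabla>f and \<nabla>d give
  \<parallel>F'(k+1)\<parallel>* \<le> L2 r^2 + A(k) r. Since \<sigma> A(k) = sqrt (H \<parallel>F'(k)\<parallel>* / 3), eliminating r leaves
  a bound of order \<parallel>F'(k)\<parallel>*^(3/2).\<close>

section \<open>Norms on a finite-dimensional space\<close>

locale arbitrary_norm =
  fixes N :: "'a::euclidean_space \<Rightarrow> real"
  assumes is_norm: "is_norm N"
begin

lemma nonneg: "N x \<ge> 0"
  using is_norm by (simp add: is_norm_def)

lemma eq_0_iff: "N x = 0 \<longleftrightarrow> x = 0"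
  using is_norm by (simp add: is_norm_def)

lemma zero [simp]: "N 0 = 0"
  using eq_0_iff by simp

lemma pos: "x \<noteq> 0 \<Longrightarrow> N x > 0"
  using nonneg eq_0_iff by (metis order_less_le)

lemma scaleR: "N (c *\<^sub>R x) = \<bar>c\<bar> * N x"
  using is_norm by (simp add: is_norm_def)

lemma normalized: "x \<noteq> 0 \<Longrightarrow> N ((1 / N x) *\<^sub>R x) = 1"
  using pos[of x] by (simp add: scaleR)

lemma triangle: "N (x + y) \<le> N x + N y"
  using is_norm by (simp add: is_norm_def)

lemma minus: "N (- x) = N x"
  using scaleR[of "-1" x] by simp

lemma minus_commute: "N (x - y) = N (y - x)"
  using minus[of "x - y"] by simp

lemma sum_le: "N (sum g S) \<le> (\<Sum>i\<in>S. N (g i))"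
proof (induction S rule: infinite_finite_induct)
  case (insert a S)
  then show ?case using triangle[of "g a" "sum g S"] by simp
qed simp_all

lemma le_euclidean_norm: "N x \<le> (\<Sum>b\<in>Basis. N b) * norm x"
proof -
  have "N x = N (\<Sum>b\<in>Basis. (x \<bullet> b) *\<^sub>R b)" by (simp add: euclidean_representation)
  also have "\<dots> \<le> (\<Sum>b\<in>Basis. N ((x \<bullet> b) *\<^sub>R b))" by (rule sum_le)
  also have "\<dots> = (\<Sum>b\<in>Basis. \<bar>x \<bullet> b\<bar> * N b)" by (simp add: scaleR)
  also have "\<dots> \<le> (\<Sum>b\<in>Basis. norm x * N b)"
    by (intro sum_mono mult_right_mono) (simp_all add: Basis_le_norm nonneg)
  finally show ?thesis by (simp add: sum_distrib_right[symmetric] mult.commute)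
qed

lemma continuous: "continuous_on S N"
proof (rule lipschitz_on_continuous_on)
  show "(\<Sum>b\<in>Basis. N b)-lipschitz_on S N"
  proof (rule lipschitz_onI)
    fix x y
    have "N x \<le> N y + N (x - y)" "N y \<le> N x + N (y - x)"
      using triangle[of "x - y" y] triangle[of "y - x" x] by simp_all
    then show "dist (N x) (N y) \<le> (\<Sum>b\<in>Basis. N b) * dist x y"
      using le_euclidean_norm[of "x - y"] le_euclidean_norm[of "y - x"]
      by (simp add: dist_norm dist_real_def norm_minus_commute abs_le_iff)
  qed (simp add: nonneg sum_nonneg)
qed

text \<open>N attains a positive minimum on the compact Euclidean unit sphere.\<close>
lemma euclidean_norm_le: obtains c where "c > 0" "\<And>x. norm x \<le> c * N x"
proof -
  obtain b :: 'a where "b \<in> Basis" using nonempty_Basis by blast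
  then have "sphere (0::'a) 1 \<noteq> {}" by (auto intro!: exI[of _ b])
  then obtain p where p: "p \<in> sphere 0 1" and p_min: "\<And>y. y \<in> sphere 0 1 \<Longrightarrow> N p \<le> N y"
    using continuous_attains_inf[OF compact_sphere _ continuous] by blast
  have Np: "N p > 0" using p by (intro pos) auto
  have "N p * norm x \<le> N x" for x
  proof (cases "x = 0")
    case False
    then have "N p \<le> N ((1 / norm x) *\<^sub>R x)" by (intro p_min) simp
    with False show ?thesis by (simp add: scaleR field_simps)
  qed simp
  with Np show ?thesis by (intro that[of "1 / N p"]) (simp_all add: field_simps)
qed

lemma euclidean_norm_bounded_on_unit_ball: obtains c where "\<And>x. N x \<le> 1 \<Longrightarrow> norm x \<le> c"
proof -
  obtain c where "c > 0" and c: "\<And>x. norm x \<le> c * N x" using euclidean_norm_le by blast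
  have "norm x \<le> c" if "N x \<le> 1" for x
    using order_trans[OF c mult_left_mono[OF that]] \<open>c > 0\<close> by simp
  then show thesis by (rule that)
qed

lemma bdd_above_dual_norm: "bdd_above {g \<bullet> x | x. N x \<le> 1}"
proof -
  obtain c where c: "\<And>x. N x \<le> 1 \<Longrightarrow> norm x \<le> c"
    using euclidean_norm_bounded_on_unit_ball by blast
  have "g \<bullet> x \<le> norm g * c" if "N x \<le> 1" for x
    using norm_cauchy_schwarz[of g x] mult_left_mono[OF c[OF that], of "norm g"] by simp
  then show ?thesis by (auto simp: bdd_above_def)
qed

lemma inner_le_dual_norm: "N x \<le> 1 \<Longrightarrow> g \<bullet> x \<le> dual_norm N g"
  unfolding dual_norm_def by (auto intro!: cSup_upper bdd_above_dual_norm)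

lemma dual_norm_nonneg: "dual_norm N g \<ge> 0"
  using inner_le_dual_norm[of 0 g] by simp

lemma dual_norm_le: "(\<And>x. N x \<le> 1 \<Longrightarrow> g \<bullet> x \<le> M) \<Longrightarrow> dual_norm N g \<le> M"
  unfolding dual_norm_def by (rule cSup_least) (auto intro!: exI[of _ 0])

lemma inner_le_dual_norm_mult: "g \<bullet> x \<le> dual_norm N g * N x"
proof (cases "x = 0")
  case False
  then have "g \<bullet> ((1 / N x) *\<^sub>R x) \<le> dual_norm N g"
    by (intro inner_le_dual_norm) (simp add: normalized)
  with pos[OF False] show ?thesis by (simp add: field_simps)
qed simp

lemma dual_norm_diff_le: "dual_norm N (g - h) \<le> dual_norm N g + dual_norm N h"
proof (rule dual_norm_le)
  fix x assume "N x \<le> 1"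
  then show "(g - h) \<bullet> x \<le> dual_norm N g + dual_norm N h"
    using inner_le_dual_norm[of x g] inner_le_dual_norm[of "- x" h] by (simp add: minus inner_diff_left)
qed

lemma dual_norm_scaleR_le: "dual_norm N (c *\<^sub>R g) \<le> \<bar>c\<bar> * dual_norm N g"
proof (rule dual_norm_le)
  fix x assume "N x \<le> 1"
  have "(c *\<^sub>R g) \<bullet> x = g \<bullet> (c *\<^sub>R x)" by simp
  also have "\<dots> \<le> dual_norm N g * (\<bar>c\<bar> * N x)"
    using inner_le_dual_norm_mult[of g "c *\<^sub>R x"] by (simp only: scaleR)
  also have "\<dots> \<le> \<bar>c\<bar> * dual_norm N g"
    using \<open>N x \<le> 1\<close> mult_left_mono[of "N x" 1 "\<bar>c\<bar> * dual_norm N g"]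
    by (simp add: dual_norm_nonneg mult_ac)
  finally show "(c *\<^sub>R g) \<bullet> x \<le> \<bar>c\<bar> * dual_norm N g" .
qed

lemma bdd_above_op_norm:
  assumes "bounded_linear B"
  shows "bdd_above {\<bar>B x \<bullet> x\<bar> | x. N x \<le> 1}"
proof -
  obtain c where c: "\<And>x. N x \<le> 1 \<Longrightarrow> norm x \<le> c"
    using euclidean_norm_bounded_on_unit_ball by blast
  obtain K where "K > 0" and K: "\<And>x. norm (B x) \<le> norm x * K"
    using bounded_linear.pos_bounded[OF assms] by blast
  have "\<bar>B x \<bullet> x\<bar> \<le> c * K * c" if "N x \<le> 1" for x
  proof -
    have "\<bar>B x \<bullet> x\<bar> \<le> norm x * K * norm x"
      using Cauchy_Schwarz_ineq2[of "B x" x] mult_right_mono[OF K[of x], of "norm x"] by simp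
    also have "\<dots> \<le> c * K * c"
      using c[OF that] c[of 0] \<open>K > 0\<close> by (intro mult_mono) auto
    finally show ?thesis .
  qed
  then show ?thesis by (auto simp: bdd_above_def)
qed

lemma abs_inner_le_op_norm:
  assumes "bounded_linear B" and "N x \<le> 1"
  shows "\<bar>B x \<bullet> x\<bar> \<le> op_norm N B"
  unfolding op_norm_def using assms by (auto intro!: cSup_upper bdd_above_op_norm)

lemma op_norm_nonneg: "bounded_linear B \<Longrightarrow> op_norm N B \<ge> 0"
  using abs_inner_le_op_norm[of B 0] by (simp add: linear_simps)

lemma abs_inner_le_op_norm_mult:
  assumes "bounded_linear B"
  shows "\<bar>B x \<bullet> x\<bar> \<le> op_norm N B * (N x)\<^sup>2"
proof (cases "x = 0")
  case False
  define y where "y = (1 / N x) *\<^sub>R x"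
  have "B y = (1 / N x) *\<^sub>R B x"
    using assms by (simp add: y_def linear_simps)
  then have "B y \<bullet> y = (B x \<bullet> x) / (N x)\<^sup>2"
    by (simp add: y_def power2_eq_square)
  moreover have "\<bar>B y \<bullet> y\<bar> \<le> op_norm N B"
    using False by (intro abs_inner_le_op_norm assms) (simp add: y_def normalized)
  ultimately have "\<bar>B x \<bullet> x\<bar> / (N x)\<^sup>2 \<le> op_norm N B" by (simp add: abs_div)
  with pos[OF False] show ?thesis by (simp add: pos_divide_le_eq)
qed (use assms in \<open>simp add: linear_simps\<close>)

text \<open>Polarization; without a parallelogram law for N it costs the factor 2.\<close>
lemma symmetric_inner_le_op_norm:
  assumes B: "bounded_linear B" and sym: "\<And>a b. B a \<bullet> b = B b \<bullet> a"
  shows "B a \<bullet> b \<le> 2 * op_norm N B * N a * N b"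
proof -
  have unit_ball: "B a \<bullet> b \<le> 2 * op_norm N B" if "N a \<le> 1" "N b \<le> 1" for a b
  proof -
    have "N (a + b) \<le> 2" "N (a - b) \<le> 2"
      using that triangle[of a b] triangle[of a "- b"] by (simp_all add: minus)
    then have "op_norm N B * (N (a + b))\<^sup>2 \<le> op_norm N B * 4"
      and "op_norm N B * (N (a - b))\<^sup>2 \<le> op_norm N B * 4"
      using power_mono[OF _ nonneg, of _ 2 2] op_norm_nonneg[OF B] by (fastforce intro: mult_left_mono)+
    moreover have "4 * (B a \<bullet> b) = B (a + b) \<bullet> (a + b) - B (a - b) \<bullet> (a - b)"
      using B sym[of b a] by (simp add: linear_simps inner_add inner_diff)
    ultimately show ?thesis
      using abs_inner_le_op_norm_mult[OF B, of "a + b"] abs_inner_le_op_norm_mult[OF B, of "a - b"]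
      by linarith
  qed
  show ?thesis
  proof (cases "a = 0 \<or> b = 0")
    case False
    then have "B ((1 / N a) *\<^sub>R a) \<bullet> ((1 / N b) *\<^sub>R b) \<le> 2 * op_norm N B"
      by (intro unit_ball) (simp_all add: normalized)
    with False pos[of a] pos[of b] show ?thesis
      using B by (simp add: linear_simps field_simps)
  qed (use B in \<open>auto simp: linear_simps\<close>)
qed

end

section \<open>Calculus along lines\<close>

lemma has_vector_derivative_along_line:
  assumes "(F has_derivative F') (at (p + t *\<^sub>R w))"
  shows "((\<lambda>s. F (p + s *\<^sub>R w)) has_vector_derivative F' w) (at t)"
proof -
  have "((\<lambda>s. p + s *\<^sub>R w) has_derivative (\<lambda>s. s *\<^sub>R w)) (at t)"
    by (auto intro!: derivative_eq_intros)
  from has_derivative_compose[OF this assms]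
  have "((\<lambda>s. F (p + s *\<^sub>R w)) has_derivative (\<lambda>s. F' (s *\<^sub>R w))) (at t)" .
  moreover have "F' (s *\<^sub>R w) = s *\<^sub>R F' w" for s
    using linear_scale[OF has_derivative_linear[OF assms]] by blast
  ultimately show ?thesis by (simp add: has_vector_derivative_def)
qed

lemma has_real_derivative_along_line:
  assumes "(f has_derivative (\<lambda>h. G \<bullet> h)) (at (p + t *\<^sub>R w))"
  shows "((\<lambda>s. f (p + s *\<^sub>R w)) has_real_derivative G \<bullet> w) (at t)"
  using has_vector_derivative_along_line[OF assms]
  by (simp add: has_real_derivative_iff_has_vector_derivative)

lemma has_real_derivative_inner_along_line:
  assumes "(g has_derivative g') (at (p + t *\<^sub>R w))"
  shows "((\<lambda>s. g (p + s *\<^sub>R w) \<bullet> u) has_real_derivative g' w \<bullet> u) (at t)"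
  using bounded_linear.has_vector_derivative[OF bounded_linear_inner_left
      has_vector_derivative_along_line[OF assms]]
  by (simp add: has_real_derivative_iff_has_vector_derivative)

lemma second_difference_mean_value:
  assumes f: "\<And>y. (f has_derivative (\<lambda>h. gf y \<bullet> h)) (at y)"
    and gf: "\<And>y. (gf has_derivative Hf y) (at y)"
    and "t > 0"
  obtains a b where "0 < a" "a < t" "0 < b" "b < t"
    "f (x + t *\<^sub>R v + t *\<^sub>R u) - f (x + t *\<^sub>R u) - f (x + t *\<^sub>R v) + f x
      = t\<^sup>2 * (Hf (x + a *\<^sub>R u + b *\<^sub>R v) v \<bullet> u)"
proof -
  let ?k = "\<lambda>s. f (x + t *\<^sub>R v + s *\<^sub>R u) - f (x + s *\<^sub>R u)"
  have "(?k has_real_derivative gf (x + t *\<^sub>R v + s *\<^sub>R u) \<bullet> u - gf (x + s *\<^sub>R u) \<bullet> u) (at s)"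
    for s by (intro DERIV_diff has_real_derivative_along_line f)
  from MVT2[OF \<open>t > 0\<close> this] obtain a where a: "0 < a" "a < t"
    "?k t - ?k 0 = t * (gf (x + t *\<^sub>R v + a *\<^sub>R u) \<bullet> u - gf (x + a *\<^sub>R u) \<bullet> u)"
    by auto
  let ?m = "\<lambda>s. gf (x + a *\<^sub>R u + s *\<^sub>R v) \<bullet> u"
  from MVT2[OF \<open>t > 0\<close> has_real_derivative_inner_along_line[OF gf, where p = "x + a *\<^sub>R u" and w = v]]
  obtain b where b: "0 < b" "b < t" "?m t - ?m 0 = t * (Hf (x + a *\<^sub>R u + b *\<^sub>R v) v \<bullet> u)"
    by auto
  have "x + t *\<^sub>R v + a *\<^sub>R u = x + a *\<^sub>R u + t *\<^sub>R v" by (simp add: algebra_simps)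
  with a(3) b(3) have "?k t - ?k 0 = t\<^sup>2 * (Hf (x + a *\<^sub>R u + b *\<^sub>R v) v \<bullet> u)"
    by (simp add: power2_eq_square)
  with a b show ?thesis by (intro that[of a b]) (simp_all add: algebra_simps)
qed

lemma isCont_small_steps:
  fixes q :: "'a::real_normed_vector \<Rightarrow> real"
  assumes "isCont q x" and "e > 0"
  obtains t where "t > 0"
    and "\<And>a b. 0 < a \<Longrightarrow> a < t \<Longrightarrow> 0 < b \<Longrightarrow> b < t \<Longrightarrow> \<bar>q (x + a *\<^sub>R u + b *\<^sub>R v) - q x\<bar> < e"
proof -
  obtain \<delta> where "\<delta> > 0" and \<delta>: "\<And>z. dist z x < \<delta> \<Longrightarrow> \<bar>q z - q x\<bar> < e"
    using assms unfolding continuous_at_eps_delta dist_real_def by blast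
  define t where "t = \<delta> / (norm u + norm v + 1)"
  have "norm u + norm v + 1 > 0" using norm_ge_zero[of u] norm_ge_zero[of v] by linarith
  with \<open>\<delta> > 0\<close> have "t > 0" by (simp add: t_def)
  have "dist (x + a *\<^sub>R u + b *\<^sub>R v) x < \<delta>" if "0 < a" "a < t" "0 < b" "b < t" for a b
  proof -
    have "dist (x + a *\<^sub>R u + b *\<^sub>R v) x \<le> a * norm u + b * norm v"
      using norm_triangle_ineq[of "a *\<^sub>R u" "b *\<^sub>R v"] that by (simp add: dist_norm)
    also have "\<dots> \<le> t * (norm u + norm v)"
      using that by (simp add: distrib_left add_mono mult_right_mono)
    also have "\<dots> < t * (norm u + norm v + 1)"
      using \<open>t > 0\<close> by simp
    also have "\<dots> = \<delta>"
      using \<open>norm u + norm v + 1 > 0\<close> by (simp add: t_def)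
    finally show ?thesis .
  qed
  with \<open>t > 0\<close> \<delta> show thesis by (intro that) auto
qed

text \<open>Schwarz's theorem: the same second difference of f is t^2 times a value of
  \<open>Hf _ v \<bullet> u\<close> and of \<open>Hf _ u \<bullet> v\<close> at points that tend to x with t.\<close>
lemma hessian_symmetric:
  assumes f: "\<And>y. (f has_derivative (\<lambda>h. gf y \<bullet> h)) (at y)"
    and gf: "\<And>y. (gf has_derivative Hf y) (at y)"
    and cont: "\<And>h. continuous_on UNIV (\<lambda>y. Hf y h)"
  shows "Hf x u \<bullet> v = Hf x v \<bullet> u"
proof (rule ccontr)
  let ?q = "\<lambda>z. Hf z v \<bullet> u" and ?q' = "\<lambda>z. Hf z u \<bullet> v"
  assume "?q' x \<noteq> ?q x"
  define e where "e = \<bar>?q x - ?q' x\<bar> / 2"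
  have "e > 0" using \<open>?q' x \<noteq> ?q x\<close> by (simp add: e_def)
  have "isCont (\<lambda>z. Hf z h) x" for h
    using cont[of h] by (simp add: continuous_on_eq_continuous_at)
  then have "isCont ?q x" "isCont ?q' x" by (auto intro: continuous_inner continuous_const)
  obtain t1 where "t1 > 0" and t1: "\<And>a b. 0 < a \<Longrightarrow> a < t1 \<Longrightarrow> 0 < b \<Longrightarrow> b < t1 \<Longrightarrow>
      \<bar>?q (x + a *\<^sub>R u + b *\<^sub>R v) - ?q x\<bar> < e"
    using isCont_small_steps[OF \<open>isCont ?q x\<close> \<open>e > 0\<close>] by blast
  obtain t2 where "t2 > 0" and t2: "\<And>a b. 0 < a \<Longrightarrow> a < t2 \<Longrightarrow> 0 < b \<Longrightarrow> b < t2 \<Longrightarrow>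
      \<bar>?q' (x + a *\<^sub>R v + b *\<^sub>R u) - ?q' x\<bar> < e"
    using isCont_small_steps[OF \<open>isCont ?q' x\<close> \<open>e > 0\<close>] by blast
  define t where "t = min t1 t2"
  have "t > 0" using \<open>t1 > 0\<close> \<open>t2 > 0\<close> by (simp add: t_def)
  obtain a b where ab: "0 < a" "a < t" "0 < b" "b < t"
    "f (x + t *\<^sub>R v + t *\<^sub>R u) - f (x + t *\<^sub>R u) - f (x + t *\<^sub>R v) + f x
      = t\<^sup>2 * ?q (x + a *\<^sub>R u + b *\<^sub>R v)"
    using second_difference_mean_value[OF f gf \<open>t > 0\<close>] .
  obtain a' b' where ab': "0 < a'" "a' < t" "0 < b'" "b' < t"
    "f (x + t *\<^sub>R u + t *\<^sub>R v) - f (x + t *\<^sub>R v) - f (x + t *\<^sub>R u) + f x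
      = t\<^sup>2 * ?q' (x + a' *\<^sub>R v + b' *\<^sub>R u)"
    using second_difference_mean_value[OF f gf \<open>t > 0\<close>] .
  have swap: "x + t *\<^sub>R u + t *\<^sub>R v = x + t *\<^sub>R v + t *\<^sub>R u" by (simp add: algebra_simps)
  have "t\<^sup>2 * ?q (x + a *\<^sub>R u + b *\<^sub>R v) = t\<^sup>2 * ?q' (x + a' *\<^sub>R v + b' *\<^sub>R u)"
    using ab(5) ab'(5) unfolding swap by linarith
  with \<open>t > 0\<close> have "?q (x + a *\<^sub>R u + b *\<^sub>R v) = ?q' (x + a' *\<^sub>R v + b' *\<^sub>R u)"
    by simp
  moreover have "\<bar>?q (x + a *\<^sub>R u + b *\<^sub>R v) - ?q x\<bar> < e"
    using ab by (intro t1) (simp_all add: t_def)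
  moreover have "\<bar>?q' (x + a' *\<^sub>R v + b' *\<^sub>R u) - ?q' x\<bar> < e"
    using ab' by (intro t2) (simp_all add: t_def)
  ultimately show False by (simp add: e_def abs_if split: if_splits)
qed

lemma DERIV_nonneg_at_right_min:
  assumes "(\<phi> has_real_derivative D) (at 0)" and "\<And>t. 0 < t \<Longrightarrow> t \<le> 1 \<Longrightarrow> \<phi> 0 \<le> \<phi> t"
  shows "0 \<le> D"
proof (rule ccontr)
  assume "\<not> 0 \<le> D"
  then obtain \<delta> where "\<delta> > 0" and \<delta>: "\<And>h. 0 < h \<Longrightarrow> h < \<delta> \<Longrightarrow> \<phi> h < \<phi> 0"
    using DERIV_neg_dec_right[OF assms(1)] by auto
  have "\<phi> (min (\<delta> / 2) 1) < \<phi> 0" using \<open>\<delta> > 0\<close> by (intro \<delta>) auto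
  with assms(2)[of "min (\<delta> / 2) 1"] \<open>\<delta> > 0\<close> show False by simp
qed

lemma first_order_remainder_le:
  fixes \<phi> \<phi>' :: "real \<Rightarrow> real"
  assumes "\<And>t. 0 \<le> t \<Longrightarrow> t \<le> 1 \<Longrightarrow> (\<phi> has_real_derivative \<phi>' t) (at t)"
    and "\<And>t. 0 \<le> t \<Longrightarrow> t \<le> 1 \<Longrightarrow> \<phi>' t - \<phi>' 0 \<le> K * t"
  shows "\<phi> 1 - \<phi> 0 - \<phi>' 0 \<le> K / 2"
proof -
  let ?g = "\<lambda>t. \<phi> t - t * \<phi>' 0 - K / 2 * t\<^sup>2"
  have "?g 1 \<le> ?g 0"
  proof (rule DERIV_nonpos_imp_nonincreasing[of 0 1 ?g])
    fix t :: real assume t: "0 \<le> t" "t \<le> 1"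
    have "(?g has_real_derivative \<phi>' t - \<phi>' 0 - K * t) (at t)"
      using assms(1)[OF t] by (auto intro!: derivative_eq_intros)
    with assms(2)[OF t] show "\<exists>y. (?g has_real_derivative y) (at t) \<and> y \<le> 0" by force
  qed simp
  then show ?thesis by simp
qed

section \<open>Subgradients\<close>

lemma subdiff_monotone:
  assumes "a \<in> subdiff D \<psi> x" and "b \<in> subdiff D \<psi> y"
  shows "(a - b) \<bullet> (x - y) \<ge> 0"
proof -
  have "\<psi> y \<ge> \<psi> x + a \<bullet> (y - x)" and "\<psi> x \<ge> \<psi> y + b \<bullet> (x - y)"
    using assms by (auto simp: subdiff_def)
  then show ?thesis by (simp add: inner_diff inner_commute)
qed

lemma minimizer_neg_gradient_in_subdiff:
  assumes "convex D" and "convex_on D \<psi>" and "x \<in> D"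
    and P: "(P has_derivative (\<lambda>h. G \<bullet> h)) (at x)"
    and min: "\<And>z. z \<in> D \<Longrightarrow> P x + \<psi> x \<le> P z + \<psi> z"
  shows "- G \<in> subdiff D \<psi> x"
  unfolding subdiff_def
proof (intro CollectI conjI ballI \<open>x \<in> D\<close>)
  fix y assume "y \<in> D"
  \<comment> \<open>by convexity \<psi> lies below its chord on the segment, so \<open>?\<phi>\<close> has a right minimum at 0\<close>
  let ?\<phi> = "\<lambda>t. P (x + t *\<^sub>R (y - x)) + t * (\<psi> y - \<psi> x)"
  have "(P has_derivative (\<lambda>h. G \<bullet> h)) (at (x + 0 *\<^sub>R (y - x)))" using P by simp
  from has_real_derivative_along_line[OF this]
  have "(?\<phi> has_real_derivative G \<bullet> (y - x) + (\<psi> y - \<psi> x)) (at 0)"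
    by (auto intro!: derivative_eq_intros)
  moreover have "?\<phi> 0 \<le> ?\<phi> t" if "0 < t" "t \<le> 1" for t
  proof -
    have z: "x + t *\<^sub>R (y - x) = (1 - t) *\<^sub>R x + t *\<^sub>R y" by (simp add: algebra_simps)
    have "\<psi> (x + t *\<^sub>R (y - x)) \<le> (1 - t) * \<psi> x + t * \<psi> y"
      unfolding z using that \<open>x \<in> D\<close> \<open>y \<in> D\<close> by (intro convex_onD[OF \<open>convex_on D \<psi>\<close>]) auto
    moreover have "x + t *\<^sub>R (y - x) \<in> D"
      unfolding z using that \<open>x \<in> D\<close> \<open>y \<in> D\<close> by (intro convexD_alt[OF \<open>convex D\<close>]) auto
    ultimately show ?thesis using min by (fastforce simp: algebra_simps)
  qed
  ultimately have "0 \<le> G \<bullet> (y - x) + (\<psi> y - \<psi> x)" by (rule DERIV_nonneg_at_right_min)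
  then show "\<psi> y \<ge> \<psi> x + - G \<bullet> (y - x)" by simp
qed

section \<open>One step of the method\<close>

locale composite_problem = arbitrary_norm N
  for N :: "'a::euclidean_space \<Rightarrow> real" +
  fixes D :: "'a set" and \<psi> f d :: "'a \<Rightarrow> real" and gf gd :: "'a \<Rightarrow> 'a" and Hf :: "'a \<Rightarrow> 'a \<Rightarrow> 'a"
    and L2 \<sigma> \<mu> :: real
  assumes convex_D: "convex D" and convex_psi: "convex_on D \<psi>"
    and f_grad: "\<And>y. (f has_derivative (\<lambda>h. gf y \<bullet> h)) (at y)"
    and f_hess: "\<And>y. (gf has_derivative Hf y) (at y)"
    and hess_cont: "\<And>h. continuous_on UNIV (\<lambda>y. Hf y h)"
    and L2_nonneg: "L2 \<ge> 0"
    and hess_lip: "\<And>y z. y \<in> D \<Longrightarrow> z \<in> D \<Longrightarrow> op_norm N (\<lambda>h. Hf y h - Hf z h) \<le> L2 * N (y - z)"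
    and d_grad: "\<And>y. (d has_derivative (\<lambda>h. gd y \<bullet> h)) (at y)"
    and d_strong: "\<And>y z. y \<in> D \<Longrightarrow> z \<in> D \<Longrightarrow> d z \<ge> d y + gd y \<bullet> (z - y) + \<sigma> / 2 * (N (z - y))\<^sup>2"
    and d_lip: "\<And>y z. y \<in> D \<Longrightarrow> z \<in> D \<Longrightarrow> dual_norm N (gd y - gd z) \<le> N (y - z)"
    and f_strong: "\<And>y h. y \<in> D \<Longrightarrow> Hf y h \<bullet> h \<ge> \<mu> * (N h)\<^sup>2"
begin

lemma hess_bounded_linear: "bounded_linear (Hf y)"
  using has_derivative_bounded_linear[OF f_hess] .

lemma hess_symmetric: "Hf y u \<bullet> v = Hf y v \<bullet> u"
  by (rule hessian_symmetric[OF f_grad f_hess hess_cont])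

lemma line_point_in_D: "x \<in> D \<Longrightarrow> y \<in> D \<Longrightarrow> 0 \<le> t \<Longrightarrow> t \<le> 1 \<Longrightarrow> x + t *\<^sub>R (y - x) \<in> D"
  using convexD_alt[OF convex_D, of x y t] by (simp add: algebra_simps)

lemma hess_diff_inner_le:
  assumes "y \<in> D" and "z \<in> D"
  shows "(Hf y h - Hf z h) \<bullet> u \<le> 2 * (L2 * N (y - z)) * N h * N u"
proof -
  let ?B = "\<lambda>h. Hf y h - Hf z h"
  have B: "bounded_linear ?B" using hess_bounded_linear hess_bounded_linear by (rule bounded_linear_sub)
  have "?B h \<bullet> u \<le> 2 * op_norm N ?B * N h * N u"
    using B by (rule symmetric_inner_le_op_norm) (simp add: inner_diff_left hess_symmetric)
  also have "\<dots> \<le> 2 * (L2 * N (y - z)) * N h * N u"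
    using hess_lip[OF assms] by (intro mult_right_mono) (simp_all add: nonneg)
  finally show ?thesis .
qed

lemma gradient_remainder_le:
  assumes "x \<in> D" and "y \<in> D"
  shows "dual_norm N (gf y - gf x - Hf x (y - x)) \<le> L2 * (N (y - x))\<^sup>2"
proof (rule dual_norm_le)
  fix u assume "N u \<le> 1"
  let ?h = "y - x"
  let ?\<phi> = "\<lambda>t. gf (x + t *\<^sub>R ?h) \<bullet> u" and ?\<phi>' = "\<lambda>t. Hf (x + t *\<^sub>R ?h) ?h \<bullet> u"
  have "?\<phi> 1 - ?\<phi> 0 - ?\<phi>' 0 \<le> 2 * L2 * (N ?h)\<^sup>2 / 2"
  proof (rule first_order_remainder_le)
    show "(?\<phi> has_real_derivative ?\<phi>' t) (at t)" for t
      by (rule has_real_derivative_inner_along_line[OF f_hess])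
    fix t :: real assume "0 \<le> t" "t \<le> 1"
    then have "?\<phi>' t - ?\<phi>' 0 \<le> 2 * (L2 * N (t *\<^sub>R ?h)) * N ?h * N u"
      using hess_diff_inner_le[OF line_point_in_D[OF assms] \<open>x \<in> D\<close>, of t ?h u]
      by (simp add: inner_diff_left)
    also have "\<dots> \<le> 2 * (L2 * N (t *\<^sub>R ?h)) * N ?h * 1"
      using \<open>N u \<le> 1\<close> L2_nonneg by (intro mult_left_mono) (simp_all add: nonneg)
    also have "\<dots> = 2 * L2 * (N ?h)\<^sup>2 * t"
      using \<open>0 \<le> t\<close> by (simp add: scaleR power2_eq_square)
    finally show "?\<phi>' t - ?\<phi>' 0 \<le> 2 * L2 * (N ?h)\<^sup>2 * t" .
  qed
  then show "(gf y - gf x - Hf x ?h) \<bullet> u \<le> L2 * (N ?h)\<^sup>2"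
    by (simp add: inner_diff_left)
qed

lemma gd_strongly_monotone:
  assumes "x \<in> D" and "y \<in> D"
  shows "\<sigma> * (N (y - x))\<^sup>2 \<le> (gd y - gd x) \<bullet> (y - x)"
  using d_strong[OF assms] d_strong[OF assms(2,1)]
  by (simp add: minus_commute[of x y] inner_diff inner_commute)

lemma subdiff_smooth_part:
  assumes "g \<in> subdiff D (\<lambda>y. f y + \<psi> y) x"
  shows "g - gf x \<in> subdiff D \<psi> x"
proof -
  have "((\<lambda>z. f z - g \<bullet> z) has_derivative (\<lambda>h. (gf x - g) \<bullet> h)) (at x)"
    using f_grad[of x] by (auto intro!: derivative_eq_intros simp: inner_diff_left)
  with assms show ?thesis
    using minimizer_neg_gradient_in_subdiff[OF convex_D convex_psi, of x "\<lambda>z. f z - g \<bullet> z" "gf x - g"]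
    by (fastforce simp: subdiff_def inner_diff_right)
qed

lemma model_smooth_part_has_derivative:
  "((\<lambda>y. model f gf Hf d gd (\<lambda>_. 0) A x y) has_derivative
     (\<lambda>h. (gf x + Hf x (y - x) + A *\<^sub>R (gd y - gd x)) \<bullet> h)) (at y)"
proof -
  define Q where "Q z = Hf x (z - x) \<bullet> (z - x)" for z
  have "((\<lambda>z. z - x) has_derivative (\<lambda>h. h)) (at y)"
    by (auto intro!: derivative_eq_intros)
  from bounded_linear.has_derivative[OF hess_bounded_linear this]
  have "((\<lambda>z. Hf x (z - x)) has_derivative Hf x) (at y)" by simp
  then have "(Q has_derivative (\<lambda>h. Hf x h \<bullet> (y - x) + Hf x (y - x) \<bullet> h)) (at y)"
    unfolding Q_def by (auto intro!: derivative_eq_intros)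
  then have Q: "(Q has_derivative (\<lambda>h. 2 * (Hf x (y - x) \<bullet> h))) (at y)"
    unfolding hess_symmetric[of x _ "y - x"] by simp
  have "model f gf Hf d gd (\<lambda>_. 0) A x =
      (\<lambda>z. f x + gf x \<bullet> (z - x) + 1/2 * Q z + A * (d z - d x - gd x \<bullet> (z - x)))"
    by (simp add: fun_eq_iff model_def bregman_def Q_def)
  then show ?thesis
    by (auto intro!: derivative_eq_intros Q d_grad simp: algebra_simps)
qed

lemma is_T_subdiff:
  assumes "is_T D f gf Hf d gd \<psi> A x y"
  shows "gf y - gf x - Hf x (y - x) - A *\<^sub>R (gd y - gd x) - gf y \<in> subdiff D \<psi> y"
proof -
  have residual: "gf y - gf x - Hf x (y - x) - A *\<^sub>R (gd y - gd x) - gf y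
      = - (gf x + Hf x (y - x) + A *\<^sub>R (gd y - gd x))"
    by (simp add: algebra_simps)
  have split: "model f gf Hf d gd \<psi> A x z = model f gf Hf d gd (\<lambda>_. 0) A x z + \<psi> z" for z
    by (simp add: model_def)
  from assms show ?thesis unfolding is_T_def split residual
    by (blast intro: minimizer_neg_gradient_in_subdiff[OF convex_D convex_psi]
        model_smooth_part_has_derivative)
qed

lemma step_length_le:
  assumes "x \<in> D" and T: "is_T D f gf Hf d gd \<psi> A x y"
    and F: "F - gf x \<in> subdiff D \<psi> x" and "A \<ge> 0"
  shows "N (y - x) * (\<mu> + A * \<sigma>) \<le> dual_norm N F"
proof -
  let ?h = "y - x" and ?r = "N (y - x)"
  have "y \<in> D" using T by (simp add: is_T_def)
  have "0 \<le> (F + Hf x ?h + A *\<^sub>R (gd y - gd x)) \<bullet> (x - y)"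
    using subdiff_monotone[OF F is_T_subdiff[OF T]] by (simp add: algebra_simps)
  then have "F \<bullet> ?h + Hf x ?h \<bullet> ?h + A * ((gd y - gd x) \<bullet> ?h) \<le> 0"
    by (simp add: algebra_simps)
  moreover have "\<mu> * ?r\<^sup>2 \<le> Hf x ?h \<bullet> ?h" using f_strong[OF \<open>x \<in> D\<close>] .
  moreover have "A * (\<sigma> * ?r\<^sup>2) \<le> A * ((gd y - gd x) \<bullet> ?h)"
    using gd_strongly_monotone[OF \<open>x \<in> D\<close> \<open>y \<in> D\<close>] \<open>A \<ge> 0\<close> by (rule mult_left_mono)
  moreover have "- (F \<bullet> ?h) \<le> dual_norm N F * ?r"
    using inner_le_dual_norm_mult[of F "x - y"] by (simp add: minus_commute[of x y] inner_diff_right)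
  ultimately have "?r * (?r * (\<mu> + A * \<sigma>)) \<le> ?r * dual_norm N F"
    by (simp add: power2_eq_square algebra_simps)
  then show ?thesis
    using nonneg[of ?h] dual_norm_nonneg[of F] by (cases "?r = 0") auto
qed

lemma residual_le:
  assumes "x \<in> D" and "y \<in> D" and "A \<ge> 0"
  shows "dual_norm N (gf y - gf x - Hf x (y - x) - A *\<^sub>R (gd y - gd x))
    \<le> L2 * (N (y - x))\<^sup>2 + A * N (y - x)"
proof -
  have "dual_norm N (gf y - gf x - Hf x (y - x) - A *\<^sub>R (gd y - gd x))
      \<le> dual_norm N (gf y - gf x - Hf x (y - x)) + A * dual_norm N (gd y - gd x)"
    using dual_norm_diff_le[of "gf y - gf x - Hf x (y - x)" "A *\<^sub>R (gd y - gd x)"]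
      dual_norm_scaleR_le[of A "gd y - gd x"] \<open>A \<ge> 0\<close> by simp
  also have "\<dots> \<le> L2 * (N (y - x))\<^sup>2 + A * N (y - x)"
    using gradient_remainder_le[OF assms(1,2)] d_lip[OF assms(2,1)] \<open>A \<ge> 0\<close>
    by (intro add_mono mult_left_mono) auto
  finally show ?thesis .
qed

end

section \<open>The superlinear rate\<close>

lemma powr_three_halves:
  assumes "0 \<le> g"
  shows "(g::real) powr (3/2) = g * sqrt g"
proof (cases "g = 0")
  case False
  with assms have "g > 0" by simp
  have "g powr (3/2) = g powr 1 * g powr (1/2)" using powr_add[of g 1 "1/2"] by simp
  with \<open>g > 0\<close> show ?thesis by (simp add: powr_half_sqrt)
qed simp

lemma step_length_bounds:
  fixes r g \<mu> H :: real
  assumes "0 \<le> r" "0 \<le> g" "0 < \<mu>" "0 < H"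
    and key: "r * (\<mu> + sqrt (H / 3 * g)) \<le> g"
  shows "\<mu> * r \<le> g" and "H * r \<le> 3 * sqrt (H / 3 * g)"
proof -
  define s where "s = sqrt (H / 3 * g)"
  have "s \<ge> 0" and s2: "H * g = 3 * s\<^sup>2"
    using \<open>H > 0\<close> \<open>0 \<le> g\<close> by (simp_all add: s_def)
  have "0 \<le> r * s" "0 \<le> r * \<mu>" using \<open>0 \<le> r\<close> \<open>s \<ge> 0\<close> \<open>0 < \<mu>\<close> by simp_all
  with key have "\<mu> * r \<le> g" and "s * r \<le> g" by (simp_all add: s_def algebra_simps)
  then show "\<mu> * r \<le> g" by simp
  have "H * r \<le> 3 * s"
  proof (cases "s = 0")
    case True
    with s2 \<open>H > 0\<close> have "g = 0" by simp
    with \<open>\<mu> * r \<le> g\<close> \<open>0 \<le> r\<close> \<open>0 < \<mu>\<close> True show ?thesis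
      by (simp add: mult_le_0_iff)
  next
    case False
    have "s * (H * r) \<le> s * (3 * s)"
      using mult_left_mono[OF \<open>s * r \<le> g\<close>, of H] \<open>H > 0\<close> s2 by (simp add: power2_eq_square algebra_simps)
    with False \<open>s \<ge> 0\<close> show ?thesis by simp
  qed
  then show "H * r \<le> 3 * sqrt (H / 3 * g)" by (simp add: s_def)
qed

lemma residual_bound_from_step_length:
  fixes r g \<mu> \<sigma> L2 H :: real
  assumes "0 \<le> r" "0 \<le> g" "0 < \<mu>" "0 < \<sigma>" "0 \<le> L2" "L2 \<le> H"
    and key: "r * (\<mu> + sqrt (H / 3 * g)) \<le> g"
  shows "L2 * r\<^sup>2 + 1 / \<sigma> * sqrt (H / 3 * g) * r
    \<le> 2 * (1 / \<sigma> + 3 * L2 / (2 * H)) / \<mu> * sqrt (H / 3) * g powr (3/2)"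
proof (cases "H = 0")
  case False
  with assms have "H > 0" by simp
  define s where "s = sqrt (H / 3 * g)"
  have "s \<ge> 0" using \<open>H > 0\<close> \<open>0 \<le> g\<close> by (simp add: s_def)
  have "\<mu> * r \<le> g" and "H * r \<le> 3 * s"
    using step_length_bounds[OF \<open>0 \<le> r\<close> \<open>0 \<le> g\<close> \<open>0 < \<mu>\<close> \<open>H > 0\<close> key] by (simp_all add: s_def)
  have "sqrt (H / 3) * g powr (3/2) = s * g"
    unfolding s_def real_sqrt_mult using \<open>0 \<le> g\<close> by (simp add: powr_three_halves mult_ac)
  then have rhs: "2 * (1 / \<sigma> + 3 * L2 / (2 * H)) / \<mu> * sqrt (H / 3) * g powr (3/2)
      = 2 * (s * g / (\<mu> * \<sigma>)) + 3 * L2 * (s * g) / (\<mu> * H)"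
    using \<open>H > 0\<close> \<open>0 < \<mu>\<close> \<open>0 < \<sigma>\<close> by (simp add: field_simps)
  have "s * (\<mu> * r) \<le> s * g" using \<open>\<mu> * r \<le> g\<close> \<open>s \<ge> 0\<close> by (rule mult_left_mono)
  then have "s * r / \<sigma> \<le> s * g / (\<mu> * \<sigma>)"
    using \<open>0 < \<mu>\<close> \<open>0 < \<sigma>\<close> by (simp add: field_simps)
  also have "\<dots> \<le> 2 * (s * g / (\<mu> * \<sigma>))"
    using \<open>s \<ge> 0\<close> \<open>0 \<le> g\<close> \<open>0 < \<mu>\<close> \<open>0 < \<sigma>\<close> by (simp add: field_simps)
  finally have first: "s * r / \<sigma> \<le> 2 * (s * g / (\<mu> * \<sigma>))" .
  have "(\<mu> * r) * (H * r) \<le> g * (3 * s)"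
    using \<open>0 \<le> r\<close> \<open>H > 0\<close> \<open>0 \<le> g\<close>
    by (intro mult_mono[OF \<open>\<mu> * r \<le> g\<close> \<open>H * r \<le> 3 * s\<close>]) simp_all
  then have "L2 * ((\<mu> * r) * (H * r)) \<le> L2 * (g * (3 * s))"
    using \<open>0 \<le> L2\<close> by (rule mult_left_mono)
  then have second: "L2 * r\<^sup>2 \<le> 3 * L2 * (s * g) / (\<mu> * H)"
    using \<open>0 < \<mu>\<close> \<open>H > 0\<close> by (simp add: field_simps power2_eq_square)
  from add_mono[OF second first] show ?thesis
    unfolding rhs s_def[symmetric] by (simp add: add.commute)
qed (use assms in simp)

theorem theorem4:
  fixes N :: "'a::euclidean_space \<Rightarrow> real"
    and D :: "'a set" and \<psi> :: "'a \<Rightarrow> real"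
    and f :: "'a \<Rightarrow> real" and gf :: "'a \<Rightarrow> 'a" and Hf :: "'a \<Rightarrow> 'a \<Rightarrow> 'a"
    and d :: "'a \<Rightarrow> real" and gd :: "'a \<Rightarrow> 'a"
    and L2 \<sigma> \<mu> H :: real
    and x :: "nat \<Rightarrow> 'a" and F' :: "nat \<Rightarrow> 'a"
  assumes norm: "is_norm N"
    and psi: "closed_convex_fun D \<psi>"
    and f_grad: "\<And>y. (f has_derivative (\<lambda>h. gf y \<bullet> h)) (at y)"
    and f_hess: "\<And>y. (gf has_derivative Hf y) (at y)"
    and hess_cont: "\<And>h. continuous_on UNIV (\<lambda>y. Hf y h)"
    and f_convex: "convex_on UNIV f"
    and L2_nonneg: "L2 \<ge> 0"
    and hess_lip: "\<And>y z. y \<in> D \<Longrightarrow> z \<in> D \<Longrightarrow> op_norm N (\<lambda>h. Hf y h - Hf z h) \<le> L2 * N (y - z)"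
    and d_grad: "\<And>y. (d has_derivative (\<lambda>h. gd y \<bullet> h)) (at y)"
    and sigma: "0 < \<sigma>" "\<sigma> \<le> 1"
    and d_strong: "\<And>y z. y \<in> D \<Longrightarrow> z \<in> D \<Longrightarrow> d z \<ge> d y + gd y \<bullet> (z - y) + \<sigma> / 2 * (N (z - y))\<^sup>2"
    and d_lip: "\<And>y z. y \<in> D \<Longrightarrow> z \<in> D \<Longrightarrow> dual_norm N (gd y - gd z) \<le> N (y - z)"
    and mu: "\<mu> > 0"
    and f_strong: "\<And>y h. y \<in> D \<Longrightarrow> Hf y h \<bullet> h \<ge> \<mu> * (N h)\<^sup>2"
    and H: "H \<ge> L2"
    and x0: "x 0 \<in> D"
    and F'0: "F' 0 \<in> subdiff D (\<lambda>y. f y + \<psi> y) (x 0)"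
    and step: "\<And>k. is_T D f gf Hf d gd \<psi> (1 / \<sigma> * sqrt (H / 3 * dual_norm N (F' k))) (x k) (x (Suc k))"
    and F'_step: "\<And>k. F' (Suc k) = gf (x (Suc k)) - gf (x k) - Hf (x k) (x (Suc k) - x k)
                     - (1 / \<sigma> * sqrt (H / 3 * dual_norm N (F' k))) *\<^sub>R (gd (x (Suc k)) - gd (x k))"
  shows "dual_norm N (F' (Suc k)) \<le>
           2 * (1 / \<sigma> + 3 * L2 / (2 * H)) / \<mu> * sqrt (H / 3) * dual_norm N (F' k) powr (3/2)"
proof -
  interpret composite_problem N D \<psi> f d gf gd Hf L2 \<sigma> \<mu>
    using norm psi f_grad f_hess hess_cont L2_nonneg hess_lip d_grad d_strong d_lip f_strong
    by unfold_locales (auto simp: closed_convex_fun_def)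
  let ?A = "1 / \<sigma> * sqrt (H / 3 * dual_norm N (F' k))"
  have x_in_D: "x j \<in> D" for j
    using x0 step by (cases j) (auto simp: is_T_def)
  have subgradient: "F' j - gf (x j) \<in> subdiff D \<psi> (x j)" for j
    using F'0 is_T_subdiff[OF step] by (cases j) (simp_all add: subdiff_smooth_part F'_step)
  have "?A \<ge> 0" using sigma H L2_nonneg dual_norm_nonneg by simp
  have step_length: "N (x (Suc k) - x k) * (\<mu> + sqrt (H / 3 * dual_norm N (F' k))) \<le> dual_norm N (F' k)"
    using step_length_le[OF x_in_D step subgradient \<open>?A \<ge> 0\<close>] sigma by simp
  have residual: "dual_norm N (F' (Suc k)) \<le> L2 * (N (x (Suc k) - x k))\<^sup>2 + ?A * N (x (Suc k) - x k)"
    using residual_le[OF x_in_D x_in_D \<open>?A \<ge> 0\<close>] by (simp only: F'_step)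
  show ?thesis
    using residual residual_bound_from_step_length[OF nonneg dual_norm_nonneg mu sigma(1) L2_nonneg H step_length]
    by (rule order_trans)
qed

end
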